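(* Let $(D,\sqsubseteq)$ be a dcpo with its Scott topology, $B\subseteq D$, $A\in\mathbf{\Delta}^0_2(D)$, and $0<\alpha<\aleph_1$. (1) If $A\in\mathbf{D}_\alpha(D)$, then there is no $\sqsubseteq$-increasing $(A,1)$-alternating $B$-tree of rank $\alpha$. (2) If $D$ is a continuous domain with basis $B$, the following are equivalent: (i) $A\in\mathbf{D}_\alpha(D)$; (ii) there is no $\sqsubseteq$-increasing $(A,1)$-alternating $B$-tree of rank $\alpha$; (iii) there is no $\ll$-increasing $(A,1)$-alternating $B$-tree of rank $\alpha$.
   Context: Dcpo: poset in which every nonempty directed set has a supremum; Scott topology: open sets are upsets $O$ such that every directed set with supremum in $O$ meets $O$. Way-below: $x\ll y$ iff for every directed $S$ with $y\sqsubseteq\sqcup S$ some $s\in S$ has $x\sqsubseteq s$. Continuous domain with basis $B$: for every $x$, $B\cap\{z:z\ll x\}$ is directed with supremum $x$. $\mathbf{\Sigma}^0_2(D)$: countable unions of differences of Scott open sets; $\mathbf{\Pi}^0_2(D)$: complements; $\mathbf{\Delta}^0_2(D)$: both. Parity: ordinal $\lambda+n$ ($\lambda$ zero or limit, $n<\omega$) has the parity of $n$; $\beta\sim\alpha$ means same parity. $D_\alpha((A_\beta)_{\beta<\alpha})=\bigcup_{\beta<\alpha,\beta\not\sim\alpha}(A_\beta\setminus\bigcup_{\gamma<\beta}A_\gamma)$; $\mathbf{D}_\alpha(D)$ is the class of such sets with all $A_\beta$ Scott open. Trees: a tree is a nonempty set of finite sequences (over some set) closed under prefixes, with root the empty sequence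 $\mathit{nil}$; well-founded means no infinite branch; for well-founded $T$, $\mathrm{rank}_T(\sigma)=\sup\{\mathrm{rank}_T(\sigma a)+1:\sigma a\in T\}$ (with $\sup\emptyset=0$), and the rank of $T$ is $\mathrm{rank}_T(\mathit{nil})$. A $B$-tree is a map $f:T\to B$ with $T$ a tree; its rank is that of $T$. It is $(A,\varepsilon)$-alternating if ($f(\mathit{nil})\in A$ iff $\varepsilon=1$) and $f(\sigma a)\in A\iff f(\sigma)\notin A$ for all $\sigma,\sigma a\in T$. For $\preceq\in\{\sqsubseteq,\ll\}$, $f$ is $\preceq$-increasing if $f(\sigma)\preceq f(\sigma a)$ for all $\sigma,\sigma a\in T$. *)

theory Defs
  imports Main "HOL-Library.Countable_Set"
begin

definition directed :: "'d::order set \<Rightarrow> bool" where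
  "directed S \<longleftrightarrow> S \<noteq> {} \<and> (\<forall>x\<in>S. \<forall>y\<in>S. \<exists>z\<in>S. x \<le> z \<and> y \<le> z)"

definition is_lub :: "'d::order set \<Rightarrow> 'd \<Rightarrow> bool" where
  "is_lub S s \<longleftrightarrow> (\<forall>x\<in>S. x \<le> s) \<and> (\<forall>u. (\<forall>x\<in>S. x \<le> u) \<longrightarrow> s \<le> u)"

text \<open>The dcpo is the whole (ordered) type.\<close>
definition is_dcpo :: "'d::order itself \<Rightarrow> bool" where
  "is_dcpo _ \<longleftrightarrow> (\<forall>S::'d set. S \<noteq> {} \<and> directed S \<longrightarrow> (\<exists>s. is_lub S s))"

definition scott_open :: "'d::order set \<Rightarrow> bool" where
  "scott_open U \<longleftrightarrow> (\<forall>x y. x \<in> U \<and> x \<le> y \<longrightarrow> y \<in> U) \<and>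
     (\<forall>S s. directed S \<and> is_lub S s \<and> s \<in> U \<longrightarrow> S \<inter> U \<noteq> {})"

definition way_below :: "'d::order \<Rightarrow> 'd \<Rightarrow> bool" where
  "way_below x y \<longleftrightarrow> (\<forall>S s. directed S \<and> is_lub S s \<and> y \<le> s \<longrightarrow> (\<exists>z\<in>S. x \<le> z))"

definition continuous_domain_basis :: "'d::order set \<Rightarrow> bool" where
  "continuous_domain_basis B \<longleftrightarrow>
     (\<forall>x. directed {z \<in> B. way_below z x} \<and> is_lub {z \<in> B. way_below z x} x)"

definition Sigma02 :: "'d::order set set" where
  "Sigma02 = {A. \<exists>U V :: nat \<Rightarrow> 'd set. (\<forall>n. scott_open (U n) \<and> scott_open (V n)) \<and>
                  A = (\<Union>n. U n - V n)}"

definition Pi02 :: "'d::order set set" where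
  "Pi02 = {A. - A \<in> Sigma02}"

definition Delta02 :: "'d::order set set" where
  "Delta02 = Sigma02 \<inter> Pi02"

definition zero_or_limit :: "'o::wellorder \<Rightarrow> bool" where
  "zero_or_limit \<beta> \<longleftrightarrow> (\<forall>\<gamma><\<beta>. \<exists>\<delta>. \<gamma> < \<delta> \<and> \<delta> < \<beta>)"

text \<open>beta = lambda + n with n odd, where n is the number of ordinals in [\<lambda>,\<beta>).\<close>
definition odd_ord :: "'o::wellorder \<Rightarrow> bool" where
  "odd_ord \<beta> \<longleftrightarrow> (\<exists>l. zero_or_limit l \<and> l \<le> \<beta> \<and> finite {\<gamma>. l \<le> \<gamma> \<and> \<gamma> < \<beta>}
                     \<and> odd (card {\<gamma>. l \<le> \<gamma> \<and> \<gamma> < \<beta>}))"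

definition same_parity :: "'o::wellorder \<Rightarrow> 'o \<Rightarrow> bool" where
  "same_parity \<beta> \<alpha> \<longleftrightarrow> (odd_ord \<beta> \<longleftrightarrow> odd_ord \<alpha>)"

definition D_op :: "'o::wellorder \<Rightarrow> ('o \<Rightarrow> 'd set) \<Rightarrow> 'd set" where
  "D_op \<alpha> As = (\<Union>\<beta>\<in>{\<beta>. \<beta> < \<alpha> \<and> \<not> same_parity \<beta> \<alpha>}. As \<beta> - (\<Union>\<gamma>\<in>{\<gamma>. \<gamma> < \<beta>}. As \<gamma>))"

definition D_class :: "'o::wellorder \<Rightarrow> 'd::order set set" where
  "D_class \<alpha> = {X. \<exists>As :: 'o \<Rightarrow> 'd set. (\<forall>\<beta><\<alpha>. scott_open (As \<beta>)) \<and> X = D_op \<alpha> As}"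

definition is_tree :: "'a list set \<Rightarrow> bool" where
  "is_tree T \<longleftrightarrow> T \<noteq> {} \<and> (\<forall>\<sigma> \<tau>. \<sigma> @ \<tau> \<in> T \<longrightarrow> \<sigma> \<in> T)"

text \<open>rho is the rank function of T with values in the well-order:
  rho(s) is the least ordinal strictly above all ranks of children of s
  (= sup of rank(child)+1).  Existence of such rho forces well-foundedness.\<close>
definition rank_function :: "'a list set \<Rightarrow> ('a list \<Rightarrow> 'o::wellorder) \<Rightarrow> bool" where
  "rank_function T \<rho> \<longleftrightarrow> (\<forall>\<sigma>\<in>T.
      (\<forall>a. \<sigma> @ [a] \<in> T \<longrightarrow> \<rho> (\<sigma> @ [a]) < \<rho> \<sigma>) \<and>
      (\<forall>\<gamma>. (\<forall>a. \<sigma> @ [a] \<in> T \<longrightarrow> \<rho> (\<sigma> @ [a]) < \<gamma>) \<longrightarrow> \<rho> \<sigma> \<le> \<gamma>))"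

definition tree_has_rank :: "'a list set \<Rightarrow> 'o::wellorder \<Rightarrow> bool" where
  "tree_has_rank T \<alpha> \<longleftrightarrow> (\<exists>\<rho>. rank_function T \<rho> \<and> \<rho> [] = \<alpha>)"

definition B_tree :: "'d set \<Rightarrow> 'a list set \<Rightarrow> ('a list \<Rightarrow> 'd) \<Rightarrow> bool" where
  "B_tree B T f \<longleftrightarrow> is_tree T \<and> (\<forall>\<sigma>\<in>T. f \<sigma> \<in> B)"

text \<open>(A,eps)-alternating, with eps = 1 encoded as True.\<close>
definition alternating :: "'d set \<Rightarrow> bool \<Rightarrow> 'a list set \<Rightarrow> ('a list \<Rightarrow> 'd) \<Rightarrow> bool" where
  "alternating A eps T f \<longleftrightarrow> (f [] \<in> A \<longleftrightarrow> eps) \<and>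
     (\<forall>\<sigma> a. \<sigma> \<in> T \<and> \<sigma> @ [a] \<in> T \<longrightarrow> (f (\<sigma> @ [a]) \<in> A \<longleftrightarrow> f \<sigma> \<notin> A))"

definition increasing :: "('d \<Rightarrow> 'd \<Rightarrow> bool) \<Rightarrow> 'a list set \<Rightarrow> ('a list \<Rightarrow> 'd) \<Rightarrow> bool" where
  "increasing R T f \<longleftrightarrow> (\<forall>\<sigma> a. \<sigma> \<in> T \<and> \<sigma> @ [a] \<in> T \<longrightarrow> R (f \<sigma>) (f (\<sigma> @ [a])))"

definition inc_alt_tree :: "('d \<Rightarrow> 'd \<Rightarrow> bool) \<Rightarrow> 'd set \<Rightarrow> 'd set \<Rightarrow> 'o::wellorder
     \<Rightarrow> 'a list set \<Rightarrow> ('a list \<Rightarrow> 'd) \<Rightarrow> bool" where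
  "inc_alt_tree R A B \<alpha> T f \<longleftrightarrow> B_tree B T f \<and> tree_has_rank T \<alpha> \<and>
      alternating A True T f \<and> increasing R T f"

end

theory Submission
  imports Defs "HOL-Library.Countable_Set"
begin

text \<open>
  (1) Write \<open>A = D\<^sub>\<alpha>(A\<^sub>\<beta>)\<close> and let the level of \<open>x\<close> be the least \<open>\<beta> < \<alpha>\<close> with
  \<open>x \<in> A\<^sub>\<beta>\<close> (or \<open>\<alpha>\<close> if there is none); membership in \<open>A\<close> is decided by the parity of the
  level. Levels can only decrease along \<open>\<sqsubseteq>\<close>, and strictly so whenever \<open>A\<close>-membership flips,
  so along a \<open>\<sqsubseteq>\<close>-increasing alternating tree the level dominates the rank; at the root this
  forces level \<open>\<alpha>\<close>, contradicting \<open>f(nil) \<in> A\<close>.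

  (2) Conversely, call \<open>b\<close> of alternation rank at most \<open>\<beta>\<close> if every basis element \<open>c \<gg> b\<close>
  on the other side of \<open>A\<close> has alternation rank below \<open>\<beta>\<close>. If some \<open>b \<in> B \<inter> A\<close> has no rank
  below \<open>\<alpha>\<close>, the choices witnessing this, indexed by strictly descending sequences of
  ordinals below \<open>\<alpha>\<close>, form a \<open>\<ll>\<close>-increasing alternating tree of rank \<open>\<alpha>\<close>. Otherwise the Scott
  open sets \<open>A\<^sub>\<beta>\<close> generated by the basis elements of rank \<open>\<le> \<beta>\<close> (corrected for parity) present
  \<open>A\<close> as \<open>D\<^sub>\<alpha>(A\<^sub>\<beta>)\<close>; here \<open>A \<in> \<Delta>\<^sup>0\<^sub>2\<close> is what lets every \<open>x\<close> be approximated from below by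
  basis elements on the same side of \<open>A\<close> as \<open>x\<close>.
\<close>

subsection \<open>Way-below and the Scott topology\<close>

lemma way_below_imp_le: "way_below x y \<Longrightarrow> x \<le> (y::'d::order)"
proof -
  assume "way_below x y"
  moreover have "directed {y}" by (simp add: directed_def)
  moreover have "is_lub {y} y" by (simp add: is_lub_def)
  ultimately show ?thesis unfolding way_below_def by blast
qed

lemma way_below_le_trans: "way_below x y \<Longrightarrow> y \<le> z \<Longrightarrow> way_below x (z::'d::order)"
  unfolding way_below_def by (meson order_trans)

lemma le_way_below_trans: "x \<le> y \<Longrightarrow> way_below y z \<Longrightarrow> way_below x (z::'d::order)"
  unfolding way_below_def by (meson order_trans)

lemma way_below_trans: "way_below x y \<Longrightarrow> way_below y z \<Longrightarrow> way_below x (z::'d::order)"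
  using way_below_imp_le way_below_le_trans by blast

lemma directed_upper_bound: "directed S \<Longrightarrow> x \<in> S \<Longrightarrow> y \<in> S \<Longrightarrow> \<exists>z\<in>S. x \<le> z \<and> y \<le> z"
  unfolding directed_def by blast

lemma scott_open_upward: "scott_open U \<Longrightarrow> x \<in> U \<Longrightarrow> x \<le> y \<Longrightarrow> y \<in> U"
  unfolding scott_open_def by blast

lemma way_below_interpolate:
  fixes B :: "'d::order set"
  assumes B: "continuous_domain_basis B" and "way_below x s"
  shows "\<exists>e\<in>B. way_below x e \<and> way_below e s"
proof -
  let ?S = "{d \<in> B. \<exists>e\<in>B. way_below d e \<and> way_below e s}"
  have dir: "\<And>y. directed {z \<in> B. way_below z y}" and lub: "\<And>y. is_lub {z \<in> B. way_below z y} y"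
    using B unfolding continuous_domain_basis_def by auto
  have "?S \<noteq> {}"
    using dir[of s] dir unfolding directed_def by blast
  moreover have "\<exists>z\<in>?S. p \<le> z \<and> q \<le> z" if p: "p \<in> ?S" and q: "q \<in> ?S" for p q
  proof -
    obtain e1 e2 where e: "e1 \<in> B" "way_below p e1" "way_below e1 s"
      "e2 \<in> B" "way_below q e2" "way_below e2 s"
      using p q by blast
    then obtain e3 where e3: "e3 \<in> B" "way_below e3 s" "e1 \<le> e3" "e2 \<le> e3"
      using directed_upper_bound[OF dir[of s], of e1 e2] by auto
    have "p \<in> {z \<in> B. way_below z e3}" "q \<in> {z \<in> B. way_below z e3}"
      using e e3 p q way_below_le_trans by blast+
    then obtain z where "z \<in> {z \<in> B. way_below z e3}" "p \<le> z" "q \<le> z"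
      using directed_upper_bound[OF dir[of e3]] by blast
    then show ?thesis using e3 by blast
  qed
  ultimately have "directed ?S" unfolding directed_def by blast
  \<comment> \<open>\<open>?S\<close> has supremum \<open>s\<close> because it is cofinal in every \<open>{z \<in> B. z \<ll> e}\<close>, \<open>e \<ll> s\<close>.\<close>
  moreover have "is_lub ?S s"
    unfolding is_lub_def
  proof (intro conjI allI impI ballI)
    fix d assume "d \<in> ?S" then show "d \<le> s" using way_below_imp_le way_below_trans by blast
  next
    fix u assume u: "\<forall>x\<in>?S. x \<le> u"
    have "e \<le> u" if "e \<in> {z \<in> B. way_below z s}" for e
      using lub[of e] u that unfolding is_lub_def by blast
    then show "s \<le> u" using lub[of s] unfolding is_lub_def by blast
  qed
  ultimately obtain z e where "e \<in> B" "way_below z e" "way_below e s" "x \<le> z"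
    using assms(2) unfolding way_below_def by blast
  then show ?thesis using le_way_below_trans[of x z e] by blast
qed

lemma scott_open_way_below_upset:
  fixes B C :: "'d::order set"
  assumes B: "continuous_domain_basis B"
  shows "scott_open {x. \<exists>c\<in>C. way_below c x}"
  unfolding scott_open_def
proof (intro conjI allI impI)
  fix x y :: 'd assume "x \<in> {x. \<exists>c\<in>C. way_below c x} \<and> x \<le> y"
  then show "y \<in> {x. \<exists>c\<in>C. way_below c x}" using way_below_le_trans by blast
next
  fix S s assume h: "directed S \<and> is_lub S s \<and> s \<in> {x. \<exists>c\<in>C. way_below c x}"
  then obtain c where c: "c \<in> C" "way_below c s" by auto
  then obtain e where "way_below c e" "way_below e s" using way_below_interpolate[OF B] by blast
  then obtain z where "z \<in> S" "way_below c z"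
    using h way_below_le_trans unfolding way_below_def[of e s] by blast
  then show "S \<inter> {x. \<exists>c\<in>C. way_below c x} \<noteq> {}" using c by blast
qed

lemma Sigma02_basis_approx:
  fixes B :: "'d::order set"
  assumes B: "continuous_domain_basis B" and "X \<in> Sigma02" and "x \<in> X" and "way_below b x"
  shows "\<exists>c\<in>B. way_below b c \<and> way_below c x \<and> c \<in> X"
proof -
  obtain U V :: "nat \<Rightarrow> 'd set" where open_UV: "\<forall>n. scott_open (U n) \<and> scott_open (V n)"
    and X: "X = (\<Union>n. U n - V n)"
    using assms(2) unfolding Sigma02_def by blast
  obtain n where n: "x \<in> U n" "x \<notin> V n" using assms(3) X by auto
  obtain b' where b': "b' \<in> B" "way_below b b'" "way_below b' x"
    using way_below_interpolate[OF B assms(4)] by blast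
  have dir: "directed {z \<in> B. way_below z x}" and lub: "is_lub {z \<in> B. way_below z x} x"
    using B unfolding continuous_domain_basis_def by auto
  have "scott_open (U n)" using open_UV by blast
  then obtain u where u: "u \<in> {z \<in> B. way_below z x}" "u \<in> U n"
    using dir lub n(1) unfolding scott_open_def by blast
  have "b' \<in> {z \<in> B. way_below z x}" using b' by blast
  then obtain c where c: "c \<in> {z \<in> B. way_below z x}" "b' \<le> c" "u \<le> c"
    using directed_upper_bound[OF dir _ u(1)] by blast
  have "c \<in> U n" using scott_open_upward open_UV u(2) c(3) by blast
  moreover have "c \<notin> V n"
    using scott_open_upward[of "V n" c x] open_UV n(2) c(1) way_below_imp_le by blast
  ultimately show ?thesis using X c b' way_below_le_trans by blast
qed

lemma Delta02_basis_approx: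
  fixes B :: "'d::order set"
  assumes "continuous_domain_basis B" and "A \<in> Delta02" and "way_below b x"
  shows "\<exists>c\<in>B. way_below b c \<and> way_below c x \<and> (c \<in> A \<longleftrightarrow> x \<in> A)"
proof (cases "x \<in> A")
  case True
  then show ?thesis
    using Sigma02_basis_approx[OF assms(1) _ True assms(3)] assms(2)
    unfolding Delta02_def by blast
next
  case False
  then have "x \<in> - A" by simp
  then show ?thesis
    using Sigma02_basis_approx[OF assms(1) _ _ assms(3), of "- A"] assms(2)
    unfolding Delta02_def Pi02_def by blast
qed

subsection \<open>Parity of ordinals\<close>

lemma infinite_interval_below_limit:
  fixes l l' :: "'o::wellorder"
  assumes "zero_or_limit l'" and "l < l'"
  shows "infinite {\<gamma>. l \<le> \<gamma> \<and> \<gamma> < l'}"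
proof
  let ?S = "{\<gamma>. l \<le> \<gamma> \<and> \<gamma> < l'}"
  assume fin: "finite ?S"
  have "Max ?S \<in> ?S" using Max_in[OF fin] assms(2) by auto
  then obtain \<delta> where "Max ?S < \<delta>" "\<delta> < l'"
    using assms(1) unfolding zero_or_limit_def by auto
  moreover have "\<delta> \<in> ?S" using \<open>Max ?S \<in> ?S\<close> calculation by auto
  ultimately show False using Max_ge[OF fin] leD by blast
qed

lemma zero_or_limit_finite_interval_unique:
  fixes l l' b :: "'o::wellorder"
  assumes "zero_or_limit l" "l \<le> b" "finite {\<gamma>. l \<le> \<gamma> \<and> \<gamma> < b}"
    and "zero_or_limit l'" "l' \<le> b" "finite {\<gamma>. l' \<le> \<gamma> \<and> \<gamma> < b}"
  shows "l = l'"
proof (rule ccontr)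
  assume "l \<noteq> l'"
  then consider "l < l'" | "l' < l" by fastforce
  then show False
  proof cases
    case 1
    have "{\<gamma>. l \<le> \<gamma> \<and> \<gamma> < l'} \<subseteq> {\<gamma>. l \<le> \<gamma> \<and> \<gamma> < b}" using assms(5) by auto
    then show False using infinite_interval_below_limit[OF assms(4) 1] assms(3) finite_subset by blast
  next
    case 2
    have "{\<gamma>. l' \<le> \<gamma> \<and> \<gamma> < l} \<subseteq> {\<gamma>. l' \<le> \<gamma> \<and> \<gamma> < b}" using assms(2) by auto
    then show False using infinite_interval_below_limit[OF assms(1) 2] assms(6) finite_subset by blast
  qed
qed

text \<open>The least \<open>l\<close> with \<open>[l, b)\<close> finite is the zero-or-limit part of \<open>b = l + n\<close>.\<close>

lemma zero_or_limit_finite_interval_exists: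
  fixes b :: "'o::wellorder"
  shows "\<exists>l. zero_or_limit l \<and> l \<le> b \<and> finite {\<gamma>. l \<le> \<gamma> \<and> \<gamma> < b}"
proof -
  let ?fin = "\<lambda>l. finite {\<gamma>. l \<le> \<gamma> \<and> \<gamma> < b}"
  define l where "l = (LEAST l. ?fin l)"
  have fin_b: "?fin b" by (rule finite_subset[of _ "{}"]) auto
  have fin: "?fin l" unfolding l_def by (rule LeastI[of ?fin, OF fin_b])
  have "l \<le> b" unfolding l_def by (rule Least_le[of ?fin, OF fin_b])
  moreover have "zero_or_limit l"
    unfolding zero_or_limit_def
  proof (intro allI impI)
    fix g assume g: "g < l"
    show "\<exists>d. g < d \<and> d < l"
    proof (rule ccontr)
      assume "\<nexists>d. g < d \<and> d < l"
      then have "{\<gamma>. g \<le> \<gamma> \<and> \<gamma> < b} \<subseteq> insert g {\<gamma>. l \<le> \<gamma> \<and> \<gamma> < b}"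
        by (auto simp: le_less)
      then have "?fin g" using fin finite_subset by blast
      then have "l \<le> g" unfolding l_def by (rule Least_le)
      then show False using g by simp
    qed
  qed
  ultimately show ?thesis using fin by blast
qed

lemma odd_ord_iff_odd_card:
  fixes l b :: "'o::wellorder"
  assumes "zero_or_limit l" "l \<le> b" "finite {\<gamma>. l \<le> \<gamma> \<and> \<gamma> < b}"
  shows "odd_ord b \<longleftrightarrow> odd (card {\<gamma>. l \<le> \<gamma> \<and> \<gamma> < b})"
  using zero_or_limit_finite_interval_unique[OF assms] assms unfolding odd_ord_def by metis

lemma odd_ord_successor:
  fixes g s :: "'o::wellorder"
  assumes "g < s" and "\<forall>d. g < d \<longrightarrow> s \<le> d"
  shows "odd_ord s \<longleftrightarrow> \<not> odd_ord g"
proof -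
  obtain l where l: "zero_or_limit l" "l \<le> g" "finite {\<gamma>. l \<le> \<gamma> \<and> \<gamma> < g}"
    using zero_or_limit_finite_interval_exists by blast
  have eq: "{\<gamma>. l \<le> \<gamma> \<and> \<gamma> < s} = insert g {\<gamma>. l \<le> \<gamma> \<and> \<gamma> < g}"
    using assms l(2) by (auto simp: le_less) (metis less_asym less_irrefl linorder_neqE)
  then have "finite {\<gamma>. l \<le> \<gamma> \<and> \<gamma> < s}" using l(3) by simp
  moreover have "card {\<gamma>. l \<le> \<gamma> \<and> \<gamma> < s} = Suc (card {\<gamma>. l \<le> \<gamma> \<and> \<gamma> < g})"
    using eq l(3) by simp
  ultimately show ?thesis
    using odd_ord_iff_odd_card[OF l] odd_ord_iff_odd_card[OF l(1), of s] l(2) assms(1) by simp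
qed

subsection \<open>Levels in the difference hierarchy\<close>

definition D_level :: "'o::wellorder \<Rightarrow> ('o \<Rightarrow> 'd set) \<Rightarrow> 'd \<Rightarrow> 'o" where
  "D_level \<alpha> As x = (LEAST \<beta>. \<beta> < \<alpha> \<and> x \<in> As \<beta> \<or> \<beta> = \<alpha>)"

lemma D_level_le: "D_level \<alpha> As x \<le> \<alpha>"
  unfolding D_level_def by (rule Least_le) simp

lemma D_level_mem: "D_level \<alpha> As x < \<alpha> \<Longrightarrow> x \<in> As (D_level \<alpha> As x)"
  using LeastI[of "\<lambda>\<beta>. \<beta> < \<alpha> \<and> x \<in> As \<beta> \<or> \<beta> = \<alpha>" \<alpha>] unfolding D_level_def by auto

lemma D_level_least: "\<beta> < \<alpha> \<Longrightarrow> x \<in> As \<beta> \<Longrightarrow> D_level \<alpha> As x \<le> \<beta>"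
  unfolding D_level_def by (rule Least_le) simp

lemma mem_D_op_iff_D_level:
  "x \<in> D_op \<alpha> As \<longleftrightarrow> D_level \<alpha> As x < \<alpha> \<and> \<not> same_parity (D_level \<alpha> As x) \<alpha>"
proof
  assume "x \<in> D_op \<alpha> As"
  then obtain \<beta> where \<beta>: "\<beta> < \<alpha>" "\<not> same_parity \<beta> \<alpha>" "x \<in> As \<beta>" "\<forall>\<gamma><\<beta>. x \<notin> As \<gamma>"
    unfolding D_op_def by auto
  then have "D_level \<alpha> As x = \<beta>"
    using D_level_least[of \<beta> \<alpha> x As] D_level_mem[of \<alpha> As x]
    by (metis order.strict_trans1 order.not_eq_order_implies_strict)
  then show "D_level \<alpha> As x < \<alpha> \<and> \<not> same_parity (D_level \<alpha> As x) \<alpha>" using \<beta> by simp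
next
  assume "D_level \<alpha> As x < \<alpha> \<and> \<not> same_parity (D_level \<alpha> As x) \<alpha>"
  moreover have "x \<notin> As \<gamma>" if "\<gamma> < D_level \<alpha> As x" for \<gamma>
    using D_level_least[of \<gamma> \<alpha> x As] that calculation by (meson leD order.strict_trans)
  ultimately show "x \<in> D_op \<alpha> As"
    unfolding D_op_def using D_level_mem[of \<alpha> As x] by (intro UN_I[of "D_level \<alpha> As x"]) auto
qed

lemma D_level_antitone:
  assumes "\<forall>\<beta><\<alpha>. scott_open (As \<beta>)" and "x \<le> y"
  shows "D_level \<alpha> As y \<le> D_level \<alpha> As x"
proof (cases "D_level \<alpha> As x < \<alpha>")
  case True
  have "x \<in> As (D_level \<alpha> As x)" using D_level_mem True .
  then have "y \<in> As (D_level \<alpha> As x)"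
    using scott_open_upward assms True by blast
  then show ?thesis by (rule D_level_least[OF True])
next
  case False
  then show ?thesis using D_level_le[of \<alpha> As y] D_level_le[of \<alpha> As x] by simp
qed

lemma rank_function_le:
  fixes \<rho> h :: "'a list \<Rightarrow> 'o::wellorder"
  assumes \<rho>: "rank_function T \<rho>"
    and h: "\<And>\<sigma> a. \<sigma> \<in> T \<Longrightarrow> \<sigma> @ [a] \<in> T \<Longrightarrow> h (\<sigma> @ [a]) < h \<sigma>"
    and "\<sigma> \<in> T"
  shows "\<rho> \<sigma> \<le> h \<sigma>"
  using \<open>\<sigma> \<in> T\<close>
proof (induction "\<rho> \<sigma>" arbitrary: \<sigma> rule: less_induct)
  case less
  have "\<rho> (\<sigma> @ [a]) < h \<sigma>" if "\<sigma> @ [a] \<in> T" for a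
  proof -
    have "\<rho> (\<sigma> @ [a]) < \<rho> \<sigma>" using \<rho> less.prems that unfolding rank_function_def by blast
    then have "\<rho> (\<sigma> @ [a]) \<le> h (\<sigma> @ [a])" using less.hyps that by blast
    then show ?thesis using h[OF less.prems that] by simp
  qed
  then show ?case using \<rho> less.prems unfolding rank_function_def by blast
qed

lemma no_le_alternating_tree_if_D_class:
  fixes A B :: "'d::order set" and \<alpha> :: "'o::wellorder" and T :: "'a list set"
  assumes "A \<in> D_class \<alpha>"
  shows "\<not> inc_alt_tree (\<le>) A B \<alpha> T f"
proof
  assume tree: "inc_alt_tree (\<le>) A B \<alpha> T f"
  obtain As :: "'o \<Rightarrow> 'd set" where opens: "\<forall>\<beta><\<alpha>. scott_open (As \<beta>)" and A: "A = D_op \<alpha> As"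
    using assms unfolding D_class_def by blast
  obtain \<rho> :: "'a list \<Rightarrow> 'o" where \<rho>: "rank_function T \<rho>" "\<rho> [] = \<alpha>"
    using tree unfolding inc_alt_tree_def tree_has_rank_def by blast
  have "is_tree T" and alt: "alternating A True T f" and inc: "increasing (\<le>) T f"
    using tree unfolding inc_alt_tree_def B_tree_def by auto
  then have "[] \<in> T" unfolding is_tree_def by (metis append_Nil ex_in_conv)
  let ?lev = "\<lambda>\<sigma>. D_level \<alpha> As (f \<sigma>)"
  have "?lev (\<sigma> @ [a]) < ?lev \<sigma>" if "\<sigma> \<in> T" "\<sigma> @ [a] \<in> T" for \<sigma> a
  proof -
    have "?lev (\<sigma> @ [a]) \<le> ?lev \<sigma>"
      using inc that D_level_antitone[OF opens] unfolding increasing_def by blast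
    moreover have "?lev (\<sigma> @ [a]) \<noteq> ?lev \<sigma>"
      using alt that mem_D_op_iff_D_level unfolding A alternating_def by metis
    ultimately show ?thesis by simp
  qed
  then have "\<rho> [] \<le> ?lev []" using rank_function_le[OF \<rho>(1), of ?lev] \<open>[] \<in> T\<close> by blast
  then have "\<alpha> \<le> ?lev []" using \<rho>(2) by simp
  then have "f [] \<notin> A" using D_level_le[of \<alpha> As] mem_D_op_iff_D_level unfolding A
    by (metis order.antisym less_irrefl)
  then show False using alt unfolding alternating_def by simp
qed

subsection \<open>The alternation rank of basis elements\<close>

inductive alt_rank_le :: "'d::order set \<Rightarrow> 'd set \<Rightarrow> 'o::wellorder \<Rightarrow> 'd \<Rightarrow> bool" for A B where
  "(\<And>c. c \<in> B \<Longrightarrow> way_below b c \<Longrightarrow> (c \<in> A \<longleftrightarrow> b \<notin> A) \<Longrightarrow> \<exists>\<gamma><\<beta>. alt_rank_le A B \<gamma> c)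
    \<Longrightarrow> alt_rank_le A B \<beta> b"

lemma alt_rank_le_iff: "alt_rank_le A B \<beta> b \<longleftrightarrow>
   (\<forall>c. c \<in> B \<and> way_below b c \<and> (c \<in> A \<longleftrightarrow> b \<notin> A) \<longrightarrow> (\<exists>\<gamma><\<beta>. alt_rank_le A B \<gamma> c))"
  by (subst alt_rank_le.simps) blast

lemma alt_rank_le_mono: "alt_rank_le A B \<beta> b \<Longrightarrow> \<beta> \<le> \<beta>' \<Longrightarrow> alt_rank_le A B \<beta>' b"
  unfolding alt_rank_le_iff[of A B \<beta>] alt_rank_le_iff[of A B \<beta>'] by (meson less_le_trans)

lemma alt_rank_le_way_below_same_side:
  "alt_rank_le A B \<beta> b \<Longrightarrow> way_below b c \<Longrightarrow> (c \<in> A \<longleftrightarrow> b \<in> A) \<Longrightarrow> alt_rank_le A B \<beta> c"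
  unfolding alt_rank_le_iff[of A B \<beta> b] alt_rank_le_iff[of A B \<beta> c] using way_below_trans by blast

text \<open>Passing to the successor if necessary, the rank bound can be given any prescribed parity.\<close>

lemma alt_rank_le_with_parity:
  fixes \<beta> \<delta> \<alpha> :: "'o::wellorder"
  assumes "alt_rank_le A B \<beta> c" and "\<beta> < \<delta>"
  shows "\<exists>\<gamma>\<le>\<delta>. alt_rank_le A B \<gamma> c \<and> (c \<in> A \<longleftrightarrow> \<not> same_parity \<gamma> \<alpha>)"
proof (cases "c \<in> A \<longleftrightarrow> \<not> same_parity \<beta> \<alpha>")
  case True
  then show ?thesis using assms by (meson less_imp_le)
next
  case False
  define s where "s = (LEAST \<delta>. \<beta> < \<delta>)"
  have "\<beta> < s" unfolding s_def by (rule LeastI[of _ \<delta>]) (rule assms(2))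
  moreover have succ: "\<forall>\<delta>. \<beta> < \<delta> \<longrightarrow> s \<le> \<delta>" unfolding s_def by (simp add: Least_le)
  ultimately have "odd_ord s \<longleftrightarrow> \<not> odd_ord \<beta>" using odd_ord_successor by blast
  then have "c \<in> A \<longleftrightarrow> \<not> same_parity s \<alpha>" using False unfolding same_parity_def by blast
  moreover have "alt_rank_le A B s c" using alt_rank_le_mono assms(1) \<open>\<beta> < s\<close> by (meson less_imp_le)
  ultimately show ?thesis using succ assms(2) by blast
qed

definition alt_rank_opens :: "'d::order set \<Rightarrow> 'd set \<Rightarrow> 'o::wellorder \<Rightarrow> 'o \<Rightarrow> 'd set" where
  "alt_rank_opens A B \<alpha> \<beta> = {x. \<exists>c\<in>B. way_below c x \<and>
      (\<exists>\<gamma>\<le>\<beta>. alt_rank_le A B \<gamma> c \<and> (c \<in> A \<longleftrightarrow> \<not> same_parity \<gamma> \<alpha>))}"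

lemma scott_open_alt_rank_opens:
  "continuous_domain_basis B \<Longrightarrow> scott_open (alt_rank_opens A B \<alpha> \<beta>)"
  unfolding alt_rank_opens_def
  using scott_open_way_below_upset[of B "{c \<in> B. \<exists>\<gamma>\<le>\<beta>. alt_rank_le A B \<gamma> c \<and> (c \<in> A \<longleftrightarrow> \<not> same_parity \<gamma> \<alpha>)}"]
  by (simp add: Bex_def conj_commute conj_left_commute)

lemma parity_rank_way_below:
  fixes \<alpha> \<beta> :: "'o::wellorder"
  assumes "alt_rank_le A B \<beta> b" and "b \<in> A \<longleftrightarrow> \<not> same_parity \<beta> \<alpha>"
    and "c \<in> B" and "way_below b c"
  shows "\<exists>\<gamma>\<le>\<beta>. alt_rank_le A B \<gamma> c \<and> (c \<in> A \<longleftrightarrow> \<not> same_parity \<gamma> \<alpha>)"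
proof (cases "c \<in> A \<longleftrightarrow> b \<in> A")
  case True
  then have "alt_rank_le A B \<beta> c" by (rule alt_rank_le_way_below_same_side[OF assms(1,4)])
  moreover have "c \<in> A \<longleftrightarrow> \<not> same_parity \<beta> \<alpha>" using True assms(2) by simp
  ultimately show ?thesis by blast
next
  case False
  then obtain \<gamma> where "\<gamma> < \<beta>" "alt_rank_le A B \<gamma> c"
    using assms(1,3,4) unfolding alt_rank_le_iff[of A B \<beta> b] by blast
  then show ?thesis using alt_rank_le_with_parity by blast
qed

lemma D_class_if_alt_rank_bounded:
  fixes A B :: "'d::order set" and \<alpha> :: "'o::wellorder"
  assumes B: "continuous_domain_basis B" and "A \<in> Delta02"
    and bounded: "\<And>b. b \<in> B \<Longrightarrow> b \<in> A \<Longrightarrow> \<exists>\<beta><\<alpha>. alt_rank_le A B \<beta> b"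
  shows "A \<in> D_class \<alpha>"
proof -
  let ?As = "alt_rank_opens A B \<alpha>"
  have approx: "\<exists>c\<in>B. way_below b c \<and> way_below c x \<and> (c \<in> A \<longleftrightarrow> x \<in> A)"
    if "way_below b x" for b x
    using Delta02_basis_approx[OF B \<open>A \<in> Delta02\<close> that] .
  have "x \<in> A \<longleftrightarrow> D_level \<alpha> ?As x < \<alpha> \<and> \<not> same_parity (D_level \<alpha> ?As x) \<alpha>" for x
  proof (cases "D_level \<alpha> ?As x < \<alpha>")
    case True
    let ?m = "D_level \<alpha> ?As x"
    obtain c \<beta> where c: "c \<in> B" "way_below c x" "\<beta> \<le> ?m" "alt_rank_le A B \<beta> c"
      "c \<in> A \<longleftrightarrow> \<not> same_parity \<beta> \<alpha>"
      using D_level_mem[OF True] unfolding alt_rank_opens_def by blast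
    obtain c' where c': "c' \<in> B" "way_below c c'" "way_below c' x" "c' \<in> A \<longleftrightarrow> x \<in> A"
      using approx[OF c(2)] by blast
    obtain \<gamma> where \<gamma>: "\<gamma> \<le> \<beta>" "alt_rank_le A B \<gamma> c'" "c' \<in> A \<longleftrightarrow> \<not> same_parity \<gamma> \<alpha>"
      using parity_rank_way_below[OF c(4,5) c'(1,2)] by blast
    \<comment> \<open>\<open>c'\<close> witnesses \<open>x \<in> A\<^sub>\<gamma>\<close>, so by minimality of the level \<open>\<gamma> = ?m\<close>.\<close>
    have "x \<in> ?As \<gamma>" using \<gamma> c' unfolding alt_rank_opens_def by blast
    moreover have "\<gamma> < \<alpha>" using \<gamma>(1) c(3) True by simp
    ultimately have "?m \<le> \<gamma>" by (intro D_level_least)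
    then have "\<gamma> = ?m" using \<gamma>(1) c(3) by simp
    then show ?thesis using True \<gamma>(3) c'(4) by simp
  next
    case False
    have "x \<notin> A"
    proof
      assume "x \<in> A"
      have "{z \<in> B. way_below z x} \<noteq> {}"
        using B unfolding continuous_domain_basis_def directed_def by blast
      then obtain b where "way_below b x" by blast
      then obtain c where c: "c \<in> B" "way_below c x" "c \<in> A" using approx \<open>x \<in> A\<close> by blast
      then obtain \<beta> where "\<beta> < \<alpha>" "alt_rank_le A B \<beta> c" using bounded by blast
      then obtain \<gamma> where \<gamma>: "\<gamma> \<le> \<alpha>" "alt_rank_le A B \<gamma> c" "c \<in> A \<longleftrightarrow> \<not> same_parity \<gamma> \<alpha>"
        using alt_rank_le_with_parity by blast
      have "\<gamma> \<noteq> \<alpha>" using \<gamma>(3) c(3) unfolding same_parity_def by blast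
      then have "\<gamma> < \<alpha>" using \<gamma>(1) by simp
      moreover have "x \<in> ?As \<gamma>"
        unfolding alt_rank_opens_def using c(1,2) \<gamma>(2,3) by blast
      ultimately show False using D_level_least False by fastforce
    qed
    then show ?thesis using False by simp
  qed
  then have "A = D_op \<alpha> ?As" by (simp add: set_eq_iff mem_D_op_iff_D_level)
  then show ?thesis using scott_open_alt_rank_opens[OF B] unfolding D_class_def by blast
qed

definition descending_tree :: "('b \<Rightarrow> 'o::wellorder) \<Rightarrow> 'o \<Rightarrow> 'b list set" where
  "descending_tree dec \<alpha> = {\<sigma>. sorted_wrt (>) (\<alpha> # map dec \<sigma>)}"

lemma sorted_wrt_greater_last_le:
  fixes xs :: "'o::linorder list"
  shows "sorted_wrt (>) xs \<Longrightarrow> x \<in> set xs \<Longrightarrow> last xs \<le> x"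
  by (induction xs) (auto simp: less_imp_le dest: last_in_set)

lemma is_tree_descending_tree: "is_tree (descending_tree dec \<alpha>)"
  unfolding is_tree_def
proof
  have "[] \<in> descending_tree dec \<alpha>" by (simp add: descending_tree_def)
  then show "descending_tree dec \<alpha> \<noteq> {}" by blast
qed (auto simp: descending_tree_def sorted_wrt_append)

lemma snoc_mem_descending_tree:
  assumes "\<sigma> \<in> descending_tree dec \<alpha>"
  shows "\<sigma> @ [a] \<in> descending_tree dec \<alpha> \<longleftrightarrow> dec a < last (\<alpha> # map dec \<sigma>)"
proof -
  have sorted: "sorted_wrt (>) (\<alpha> # map dec \<sigma>)"
    using assms unfolding descending_tree_def by blast
  have "last (\<alpha> # map dec \<sigma>) \<in> set (\<alpha> # map dec \<sigma>)" by (rule last_in_set) simp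
  then have "(\<forall>x\<in>set (\<alpha> # map dec \<sigma>). dec a < x) \<longleftrightarrow> dec a < last (\<alpha> # map dec \<sigma>)"
    using sorted_wrt_greater_last_le[OF sorted] less_le_trans by blast
  then show ?thesis
    using sorted sorted_wrt_append[of "(>)" "\<alpha> # map dec \<sigma>" "[dec a]"]
    unfolding descending_tree_def by simp
qed

lemma rank_function_descending_tree:
  fixes \<alpha> :: "'o::wellorder"
  assumes "{\<beta>. \<beta> < \<alpha>} \<subseteq> range dec"
  shows "rank_function (descending_tree dec \<alpha>) (\<lambda>\<sigma>. last (\<alpha> # map dec \<sigma>))"
  unfolding rank_function_def
proof (intro ballI conjI allI impI)
  fix \<sigma> a assume "\<sigma> \<in> descending_tree dec \<alpha>" "\<sigma> @ [a] \<in> descending_tree dec \<alpha>"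
  then show "last (\<alpha> # map dec (\<sigma> @ [a])) < last (\<alpha> # map dec \<sigma>)"
    using snoc_mem_descending_tree[of \<sigma> dec \<alpha> a] by simp
next
  fix \<sigma> \<gamma>
  assume \<sigma>: "\<sigma> \<in> descending_tree dec \<alpha>"
    and below: "\<forall>a. \<sigma> @ [a] \<in> descending_tree dec \<alpha> \<longrightarrow> last (\<alpha> # map dec (\<sigma> @ [a])) < \<gamma>"
  show "last (\<alpha> # map dec \<sigma>) \<le> \<gamma>"
  proof (rule ccontr)
    assume "\<not> last (\<alpha> # map dec \<sigma>) \<le> \<gamma>"
    moreover have "last (\<alpha> # map dec \<sigma>) \<le> \<alpha>"
      using \<sigma> sorted_wrt_greater_last_le[of "\<alpha> # map dec \<sigma>" \<alpha>]
      unfolding descending_tree_def by (metis list.set_intros(1) mem_Collect_eq)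
    ultimately have "\<gamma> < last (\<alpha> # map dec \<sigma>)" "\<gamma> < \<alpha>" by simp_all
    moreover obtain a where "dec a = \<gamma>" using assms \<open>\<gamma> < \<alpha>\<close> by blast
    ultimately show False using below snoc_mem_descending_tree[OF \<sigma>, of a] by auto
  qed
qed

lemma countable_subset_range:
  fixes S :: "'o set"
  assumes "countable S" and "infinite (UNIV :: 'b set)"
  obtains dec :: "'b \<Rightarrow> 'o" where "S \<subseteq> range dec"
proof -
  obtain h :: "nat \<Rightarrow> 'b" where "inj h" using infinite_countable_subset[OF assms(2)] by blast
  have "S \<subseteq> range (from_nat_into S \<circ> inv h)"
  proof
    fix s assume "s \<in> S"
    then obtain n where "s = from_nat_into S n" using subset_range_from_nat_into[OF assms(1)] by blast
    then show "s \<in> range (from_nat_into S \<circ> inv h)" using inv_f_f[OF \<open>inj h\<close>] by (metis comp_apply rangeI)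
  qed
  then show ?thesis using that by blast
qed

lemma way_below_alternating_tree_if_alt_rank_unbounded:
  fixes A B :: "'d::order set" and \<alpha> :: "'o::wellorder"
  assumes "infinite (UNIV :: 'b set)" and "countable {\<beta>. \<beta> < \<alpha>}"
    and "b \<in> B" and "b \<in> A" and unbounded: "\<forall>\<beta><\<alpha>. \<not> alt_rank_le A B \<beta> b"
  shows "\<exists>(T :: 'b list set) f. inc_alt_tree way_below A B \<alpha> T f"
proof -
  obtain dec :: "'b \<Rightarrow> 'o" where dec: "{\<beta>. \<beta> < \<alpha>} \<subseteq> range dec"
    using countable_subset_range[OF assms(2,1)] by blast
  let ?T = "descending_tree dec \<alpha>" and ?\<rho> = "\<lambda>\<sigma>. last (\<alpha> # map dec \<sigma>)"
  define unbdd where "unbdd c \<delta> \<longleftrightarrow> c \<in> B \<and> (\<forall>\<gamma><\<delta>. \<not> alt_rank_le A B \<gamma> c)" for c and \<delta> :: 'o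
  define step where
    "step c \<gamma> = (SOME d. d \<in> B \<and> way_below c d \<and> (d \<in> A \<longleftrightarrow> c \<notin> A) \<and> unbdd d \<gamma>)" for c \<gamma>
  have step: "step c \<gamma> \<in> B \<and> way_below c (step c \<gamma>) \<and> (step c \<gamma> \<in> A \<longleftrightarrow> c \<notin> A) \<and> unbdd (step c \<gamma>) \<gamma>"
    if "unbdd c \<delta>" "\<gamma> < \<delta>" for c \<gamma> \<delta>
  proof -
    have "\<not> alt_rank_le A B \<gamma> c" using that unfolding unbdd_def by blast
    then obtain d where "d \<in> B" "way_below c d" "d \<in> A \<longleftrightarrow> c \<notin> A" "\<forall>\<gamma>'<\<gamma>. \<not> alt_rank_le A B \<gamma>' d"
      unfolding alt_rank_le_iff[of A B \<gamma> c] by auto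
    then have "\<exists>d. d \<in> B \<and> way_below c d \<and> (d \<in> A \<longleftrightarrow> c \<notin> A) \<and> unbdd d \<gamma>"
      unfolding unbdd_def by blast
    then show ?thesis unfolding step_def by (rule someI_ex)
  qed
  define f where "f \<sigma> = foldl step b (map dec \<sigma>)" for \<sigma>
  have f_snoc: "f (\<sigma> @ [a]) = step (f \<sigma>) (dec a)" for \<sigma> a unfolding f_def by simp
  have unbdd_f: "\<sigma> \<in> ?T \<Longrightarrow> unbdd (f \<sigma>) (?\<rho> \<sigma>)" for \<sigma>
  proof (induction \<sigma> rule: rev_induct)
    case Nil then show ?case using assms(3) unbounded unfolding unbdd_def f_def by simp
  next
    case (snoc a \<sigma>)
    have \<sigma>: "\<sigma> \<in> ?T" using is_tree_descending_tree snoc.prems unfolding is_tree_def by blast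
    then have "dec a < ?\<rho> \<sigma>" using snoc_mem_descending_tree[OF \<sigma>, of a] snoc.prems by blast
    then show ?case using step[OF snoc.IH[OF \<sigma>]] f_snoc by simp
  qed
  have edge: "f (\<sigma> @ [a]) \<in> B \<and> way_below (f \<sigma>) (f (\<sigma> @ [a])) \<and> (f (\<sigma> @ [a]) \<in> A \<longleftrightarrow> f \<sigma> \<notin> A)"
    if "\<sigma> \<in> ?T" "\<sigma> @ [a] \<in> ?T" for \<sigma> a
    using step[OF unbdd_f[OF that(1)]] snoc_mem_descending_tree[OF that(1)] that(2) f_snoc by simp
  have "inc_alt_tree way_below A B \<alpha> ?T f"
    unfolding inc_alt_tree_def B_tree_def tree_has_rank_def alternating_def increasing_def
  proof (intro conjI)
    show "\<exists>\<rho>. rank_function ?T \<rho> \<and> \<rho> [] = \<alpha>"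
      using rank_function_descending_tree[OF dec] by auto
    show "\<forall>\<sigma>\<in>?T. f \<sigma> \<in> B" using unbdd_f unfolding unbdd_def by blast
    show "(f [] \<in> A) = True" using assms(4) unfolding f_def by simp
    show "is_tree ?T" by (rule is_tree_descending_tree)
    show "\<forall>\<sigma> a. \<sigma> \<in> ?T \<and> \<sigma> @ [a] \<in> ?T \<longrightarrow> (f (\<sigma> @ [a]) \<in> A) = (f \<sigma> \<notin> A)"
      using edge by auto
    show "\<forall>\<sigma> a. \<sigma> \<in> ?T \<and> \<sigma> @ [a] \<in> ?T \<longrightarrow> way_below (f \<sigma>) (f (\<sigma> @ [a]))"
      using edge by auto
  qed
  then show ?thesis by blast
qed

lemma inc_alt_tree_way_below_imp_le:
  "inc_alt_tree way_below A B \<alpha> T f \<Longrightarrow> inc_alt_tree (\<le>) A B \<alpha> T f"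
  unfolding inc_alt_tree_def increasing_def using way_below_imp_le by blast

theorem theorem4p7:
  fixes A B :: "'d::order set" and \<alpha> :: "'o::wellorder"
  assumes "is_dcpo TYPE('d)"
    and "A \<in> Delta02"
    and "\<exists>\<beta>. \<beta> < \<alpha>"
    and "countable {\<beta>. \<beta> < \<alpha>}"
  shows "(A \<in> D_class \<alpha> \<longrightarrow>
            \<not> (\<exists>(T :: 'a list set) f. inc_alt_tree (\<le>) A B \<alpha> T f))
       \<and> (continuous_domain_basis B \<and> infinite (UNIV :: 'b set) \<longrightarrow>
            (A \<in> D_class \<alpha> \<longleftrightarrow> \<not> (\<exists>(T :: 'b list set) f. inc_alt_tree (\<le>) A B \<alpha> T f))
          \<and> (A \<in> D_class \<alpha> \<longleftrightarrow> \<not> (\<exists>(T :: 'b list set) f. inc_alt_tree way_below A B \<alpha> T f)))"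
proof (intro conjI impI)
  show "\<not> (\<exists>(T :: 'a list set) f. inc_alt_tree (\<le>) A B \<alpha> T f)" if "A \<in> D_class \<alpha>"
    using no_le_alternating_tree_if_D_class[OF that] by blast
next
  assume B: "continuous_domain_basis B \<and> infinite (UNIV :: 'b set)"
  have i_ii: "A \<in> D_class \<alpha> \<Longrightarrow> \<not> (\<exists>(T :: 'b list set) f. inc_alt_tree (\<le>) A B \<alpha> T f)"
    using no_le_alternating_tree_if_D_class by blast
  have iii_i: "A \<in> D_class \<alpha>" if "\<not> (\<exists>(T :: 'b list set) f. inc_alt_tree way_below A B \<alpha> T f)"
  proof (rule D_class_if_alt_rank_bounded)
    show "continuous_domain_basis B" using B by blast
    show "A \<in> Delta02" by fact
    fix b assume "b \<in> B" "b \<in> A"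
    then show "\<exists>\<beta><\<alpha>. alt_rank_le A B \<beta> b"
      using way_below_alternating_tree_if_alt_rank_unbounded[OF _ assms(4)] B that by blast
  qed
  show "A \<in> D_class \<alpha> \<longleftrightarrow> \<not> (\<exists>(T :: 'b list set) f. inc_alt_tree (\<le>) A B \<alpha> T f)"
    using i_ii iii_i inc_alt_tree_way_below_imp_le by blast
  show "A \<in> D_class \<alpha> \<longleftrightarrow> \<not> (\<exists>(T :: 'b list set) f. inc_alt_tree way_below A B \<alpha> T f)"
    using i_ii iii_i inc_alt_tree_way_below_imp_le by blast
qed

end
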